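(* Let $(\mathfrak g,\mathfrak g^*,E)$ be an ENL bialgebra, let $\mathfrak d=\mathfrak g\bowtie\mathfrak g^*$ be its Drinfel'd double and $\mathfrak d^*_r$ the dual Lie algebra defined below. Then $(\mathfrak d,\mathfrak d^*_r,\mathfrak E)$ is an ENL bialgebra, where $\mathfrak E:\mathfrak g\oplus\mathfrak g^*\to\mathfrak g\oplus\mathfrak g^*$, $\mathfrak E(x+\xi)=Ex+E^*\xi$ (with dual map $\mathfrak E^*(\xi+x)=E^*\xi+Ex$ on $\mathfrak d^*\cong\mathfrak g^*\oplus\mathfrak g$).
   Context: Vector spaces are finite-dimensional over an algebraically closed field of characteristic zero. An ENL algebra is a Lie algebra with linear $E$ satisfying $E[x,y]=[x,Ey]$ for all $x,y$. A Lie bialgebra $(\mathfrak g,\mathfrak g^* )$ consists of Lie brackets on $\mathfrak g$ and $\mathfrak g^*$ such that the map $\Delta:\mathfrak g\to\mathfrak g\otimes\mathfrak g$ dual to $[\cdot,\cdot]_{\mathfrak g^*}$ satisfies $\Delta([x,y])=(\mathrm{ad}_x\otimes\mathrm{Id}+\mathrm{Id}\otimes\mathrm{ad}_x)\Delta(y)-(\mathrm{ad}_y\otimes\mathrm{Id}+\mathrm{Id}\otimes\mathrm{ad}_y)\Delta(x)$. An ENL bialgebra $(\mathfrak g,\mathfrak g^*,E)$ is a Lie bialgebra such that $(\mathfrak g,E)$ and $(\mathfrak g^*,E^* )$ are ENL algebras ($E^*$ the dual map). The Drinfel'd double $\mathfrak d=\mathfrak g\bowtie\mathfrak g^*$ is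 $\mathfrak g\oplus\mathfrak g^*$ with bracket $[x+\xi,y+\eta]=([x,y]_{\mathfrak g}+\mathfrak{ad}^*_\xi y-\mathfrak{ad}^*_\eta x)+([\xi,\eta]_{\mathfrak g^*}+\mathrm{ad}^*_x\eta-\mathrm{ad}^*_y\xi)$, where $\langle\mathrm{ad}^*_x\xi,y\rangle=-\langle\xi,[x,y]_{\mathfrak g}\rangle$ and $\langle\mathfrak{ad}^*_\xi x,\eta\rangle=-\langle x,[\xi,\eta]_{\mathfrak g^*}\rangle$. With $r=\sum_i e_i\otimes\xi_i$ for dual bases, $\mathfrak d^*_r$ is $\mathfrak d^*\cong\mathfrak g^*\oplus\mathfrak g$ with bracket $[\xi+x,\eta+y]_r=(-[\xi,\eta]_{\mathfrak g^*},[x,y]_{\mathfrak g})$; it is known that $(\mathfrak d,\mathfrak d^*_r)$ is a (quasi-triangular) Lie bialgebra. The claim thus means $\mathfrak E$ is equivariant on $\mathfrak d$ and $\mathfrak E^*$ is equivariant on $\mathfrak d^*_r$. *)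

theory Defs
  imports Main "HOL-Computational_Algebra.Polynomial"
begin

text \<open>Finite-dimensional vector spaces are modelled in coordinates: a space of
dimension card 'n is the type 'n => 'k with 'n a finite index type.
The dual space is modelled by the same type, with the canonical pairing.\<close>

definition alg_closed :: "'k::field itself \<Rightarrow> bool" where
  "alg_closed _ \<longleftrightarrow> (\<forall>p :: 'k poly. 0 < degree p \<longrightarrow> (\<exists>x. poly p x = 0))"

definition vzero :: "'n \<Rightarrow> 'k::field" where "vzero = (\<lambda>_. 0)"
definition vadd :: "('n \<Rightarrow> 'k::field) \<Rightarrow> ('n \<Rightarrow> 'k) \<Rightarrow> ('n \<Rightarrow> 'k)" where
  "vadd x y = (\<lambda>i. x i + y i)"
definition vsub :: "('n \<Rightarrow> 'k::field) \<Rightarrow> ('n \<Rightarrow> 'k) \<Rightarrow> ('n \<Rightarrow> 'k)" where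
  "vsub x y = (\<lambda>i. x i - y i)"
definition vscale :: "'k::field \<Rightarrow> ('n \<Rightarrow> 'k) \<Rightarrow> ('n \<Rightarrow> 'k)" where
  "vscale c x = (\<lambda>i. c * x i)"

definition delta :: "'n \<Rightarrow> 'n \<Rightarrow> 'k::field" where
  "delta j = (\<lambda>i. if i = j then 1 else 0)"

definition pair :: "('n::finite \<Rightarrow> 'k::field) \<Rightarrow> ('n \<Rightarrow> 'k) \<Rightarrow> 'k" where
  "pair f x = (\<Sum>i\<in>UNIV. f i * x i)"

definition linear_map :: "(('n \<Rightarrow> 'k::field) \<Rightarrow> ('m \<Rightarrow> 'k)) \<Rightarrow> bool" where
  "linear_map f \<longleftrightarrow> (\<forall>x y. f (vadd x y) = vadd (f x) (f y)) \<and> (\<forall>c x. f (vscale c x) = vscale c (f x))"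

definition bilinear_map :: "(('n \<Rightarrow> 'k::field) \<Rightarrow> ('n \<Rightarrow> 'k) \<Rightarrow> ('n \<Rightarrow> 'k)) \<Rightarrow> bool" where
  "bilinear_map b \<longleftrightarrow> (\<forall>x. linear_map (b x)) \<and> (\<forall>y. linear_map (\<lambda>x. b x y))"

definition lie_algebra :: "(('n \<Rightarrow> 'k::field) \<Rightarrow> ('n \<Rightarrow> 'k) \<Rightarrow> ('n \<Rightarrow> 'k)) \<Rightarrow> bool" where
  "lie_algebra b \<longleftrightarrow> bilinear_map b \<and> (\<forall>x. b x x = vzero) \<and>
     (\<forall>x y z. vadd (vadd (b x (b y z)) (b y (b z x))) (b z (b x y)) = vzero)"

text \<open>Dual (transpose) map: pair (adj E xi) x = pair xi (E x).\<close>
definition adj :: "(('n::finite \<Rightarrow> 'k::field) \<Rightarrow> ('n \<Rightarrow> 'k)) \<Rightarrow> ('n \<Rightarrow> 'k) \<Rightarrow> ('n \<Rightarrow> 'k)" where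
  "adj E xi = (\<lambda>j. pair xi (E (delta j)))"

definition ENL_algebra :: "(('n \<Rightarrow> 'k::field) \<Rightarrow> ('n \<Rightarrow> 'k) \<Rightarrow> ('n \<Rightarrow> 'k)) \<Rightarrow> (('n \<Rightarrow> 'k) \<Rightarrow> ('n \<Rightarrow> 'k)) \<Rightarrow> bool" where
  "ENL_algebra b E \<longleftrightarrow> lie_algebra b \<and> linear_map E \<and> (\<forall>x y. E (b x y) = b x (E y))"

text \<open>Cobracket Delta : g -> g \<otimes> g dual to the bracket bs on g*; tensors g \<otimes> g are
  coordinate functions on 'n \<times> 'n.\<close>
definition cobracket :: "(('n::finite \<Rightarrow> 'k::field) \<Rightarrow> ('n \<Rightarrow> 'k) \<Rightarrow> ('n \<Rightarrow> 'k)) \<Rightarrow> ('n \<Rightarrow> 'k) \<Rightarrow> ('n \<times> 'n \<Rightarrow> 'k)" where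
  "cobracket bs x = (\<lambda>(i, j). pair (bs (delta i) (delta j)) x)"

definition ad_tensor1 :: "(('n::finite \<Rightarrow> 'k::field) \<Rightarrow> ('n \<Rightarrow> 'k) \<Rightarrow> ('n \<Rightarrow> 'k)) \<Rightarrow> ('n \<Rightarrow> 'k) \<Rightarrow> ('n \<times> 'n \<Rightarrow> 'k) \<Rightarrow> ('n \<times> 'n \<Rightarrow> 'k)" where
  "ad_tensor1 b x T = (\<lambda>(i, j). \<Sum>k\<in>UNIV. b x (delta k) i * T (k, j))"
definition ad_tensor2 :: "(('n::finite \<Rightarrow> 'k::field) \<Rightarrow> ('n \<Rightarrow> 'k) \<Rightarrow> ('n \<Rightarrow> 'k)) \<Rightarrow> ('n \<Rightarrow> 'k) \<Rightarrow> ('n \<times> 'n \<Rightarrow> 'k) \<Rightarrow> ('n \<times> 'n \<Rightarrow> 'k)" where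
  "ad_tensor2 b x T = (\<lambda>(i, j). \<Sum>k\<in>UNIV. b x (delta k) j * T (i, k))"

definition lie_bialgebra :: "(('n::finite \<Rightarrow> 'k::field) \<Rightarrow> ('n \<Rightarrow> 'k) \<Rightarrow> ('n \<Rightarrow> 'k)) \<Rightarrow> (('n \<Rightarrow> 'k) \<Rightarrow> ('n \<Rightarrow> 'k) \<Rightarrow> ('n \<Rightarrow> 'k)) \<Rightarrow> bool" where
  "lie_bialgebra b bs \<longleftrightarrow> lie_algebra b \<and> lie_algebra bs \<and>
     (\<forall>x y. cobracket bs (b x y) =
        (\<lambda>p. (ad_tensor1 b x (cobracket bs y) p + ad_tensor2 b x (cobracket bs y) p)
           - (ad_tensor1 b y (cobracket bs x) p + ad_tensor2 b y (cobracket bs x) p)))"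

definition ENL_bialgebra :: "(('n::finite \<Rightarrow> 'k::field) \<Rightarrow> ('n \<Rightarrow> 'k) \<Rightarrow> ('n \<Rightarrow> 'k)) \<Rightarrow> (('n \<Rightarrow> 'k) \<Rightarrow> ('n \<Rightarrow> 'k) \<Rightarrow> ('n \<Rightarrow> 'k)) \<Rightarrow> (('n \<Rightarrow> 'k) \<Rightarrow> ('n \<Rightarrow> 'k)) \<Rightarrow> bool" where
  "ENL_bialgebra b bs E \<longleftrightarrow> lie_bialgebra b bs \<and> ENL_algebra b E \<and> ENL_algebra bs (adj E)"

text \<open>Coadjoint action: coad B a v is the vector with pair (coad B a v) w = - pair v (B a w).
  With B = bracket of g it is ad^*_x on g*; with B = bracket of g* it is the coadjoint
  action of g* on g.\<close>
definition coad :: "(('n::finite \<Rightarrow> 'k::field) \<Rightarrow> ('n \<Rightarrow> 'k) \<Rightarrow> ('n \<Rightarrow> 'k)) \<Rightarrow> ('n \<Rightarrow> 'k) \<Rightarrow> ('n \<Rightarrow> 'k) \<Rightarrow> ('n \<Rightarrow> 'k)" where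
  "coad B a v = (\<lambda>j. - pair v (B a (delta j)))"

text \<open>Drinfel'd double d = g \<oplus> g*, coordinates indexed by 'n + 'n (Inl: g, Inr: g*).\<close>
definition double_bracket :: "(('n::finite \<Rightarrow> 'k::field) \<Rightarrow> ('n \<Rightarrow> 'k) \<Rightarrow> ('n \<Rightarrow> 'k)) \<Rightarrow> (('n \<Rightarrow> 'k) \<Rightarrow> ('n \<Rightarrow> 'k) \<Rightarrow> ('n \<Rightarrow> 'k))
   \<Rightarrow> ('n + 'n \<Rightarrow> 'k) \<Rightarrow> ('n + 'n \<Rightarrow> 'k) \<Rightarrow> ('n + 'n \<Rightarrow> 'k)" where
  "double_bracket b bs v w =
    (let x = v \<circ> Inl; xi = v \<circ> Inr; y = w \<circ> Inl; eta = w \<circ> Inr in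
     (\<lambda>s. case s of
        Inl i \<Rightarrow> vsub (vadd (b x y) (coad bs xi y)) (coad bs eta x) i
      | Inr i \<Rightarrow> vsub (vadd (bs xi eta) (coad b x eta)) (coad b y xi) i))"

text \<open>d^*_r = g* \<oplus> g, coordinates indexed by 'n + 'n (Inl: g*, pairing with the g-part of d;
  Inr: g, pairing with the g*-part of d), bracket (-[xi,eta]_*, [x,y]).\<close>
definition dual_double_bracket :: "(('n::finite \<Rightarrow> 'k::field) \<Rightarrow> ('n \<Rightarrow> 'k) \<Rightarrow> ('n \<Rightarrow> 'k)) \<Rightarrow> (('n \<Rightarrow> 'k) \<Rightarrow> ('n \<Rightarrow> 'k) \<Rightarrow> ('n \<Rightarrow> 'k))
   \<Rightarrow> ('n + 'n \<Rightarrow> 'k) \<Rightarrow> ('n + 'n \<Rightarrow> 'k) \<Rightarrow> ('n + 'n \<Rightarrow> 'k)" where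
  "dual_double_bracket b bs f g =
    (\<lambda>s. case s of
        Inl i \<Rightarrow> - bs (f \<circ> Inl) (g \<circ> Inl) i
      | Inr i \<Rightarrow> b (f \<circ> Inr) (g \<circ> Inr) i)"

definition double_map :: "(('n::finite \<Rightarrow> 'k::field) \<Rightarrow> ('n \<Rightarrow> 'k)) \<Rightarrow> ('n + 'n \<Rightarrow> 'k) \<Rightarrow> ('n + 'n \<Rightarrow> 'k)" where
  "double_map E v = (\<lambda>s. case s of Inl i \<Rightarrow> E (v \<circ> Inl) i | Inr i \<Rightarrow> adj E (v \<circ> Inr) i)"

end

theory Submission
  imports Defs
begin

text \<open>The cocycle condition on \<open>\<Delta>\<close> is equivalent to an identity between pairings that is
  bilinear in \<open>\<xi>, \<eta>\<close>, so it may be tested on basis vectors. On the double, the Jacobi identity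
  reduces componentwise to the Jacobi identities of \<open>\<frakg>\<close>, \<open>\<frakg>\<^sup>*\<close> and this compatibility, while
  \<open>\<frakd>\<^sup>*\<^sub>r\<close> is a direct sum of Lie algebras. The form \<open>\<langle>x + \<xi>, y + \<eta>\<rangle> = \<xi>(y) + \<eta>(x)\<close> is invariant
  on \<open>\<frakd>\<close>, so the coadjoint action of \<open>\<frakd>\<close> is its adjoint action transported along this form, and
  the cobracket of \<open>\<frakd>\<close> becomes the coboundary \<open>w \<mapsto> ad\<^sub>w r\<close>; coboundaries satisfy the cocycle
  condition by the Jacobi identity of \<open>\<frakd>\<close> alone. Finally \<open>E\<close> commutes with every \<open>ad\<^sub>x\<close> and
  \<open>E\<^sup>*\<close> with every \<open>ad\<^sup>*\<^sub>\<xi>\<close>, and the transpose of \<open>\<frakE>\<close> is again \<open>E\<^sup>* \<oplus> E\<close>.\<close>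


lemma pair_delta [simp]: "pair (delta k) v = v k"
proof -
  have "pair (delta k) v = (\<Sum>i\<in>UNIV. if k = i then v i else 0)"
    unfolding pair_def by (rule sum.cong) (auto simp: delta_def)
  then show ?thesis by simp
qed

lemma pair_commute: "pair f x = pair x f"
  unfolding pair_def by (simp add: mult.commute)

lemma pair_eqI: "(\<And>f. pair f v = pair f w) \<Longrightarrow> v = w"
  by (metis ext pair_delta)

lemma pair_vadd_right [simp]: "pair f (vadd x y) = pair f x + pair f y"
  unfolding pair_def vadd_def by (simp add: algebra_simps sum.distrib)
lemma pair_vsub_right [simp]: "pair f (vsub x y) = pair f x - pair f y"
  unfolding pair_def vsub_def by (simp add: algebra_simps sum_subtractf)
lemma pair_vscale_right [simp]: "pair f (vscale c x) = c * pair f x"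
  unfolding pair_def vscale_def by (simp add: algebra_simps sum_distrib_left)
lemma pair_vzero_right [simp]: "pair f vzero = 0"
  unfolding pair_def vzero_def by simp
lemma pair_vadd_left [simp]: "pair (vadd x y) f = pair x f + pair y f"
  by (simp add: pair_commute[of _ f])
lemma pair_vsub_left [simp]: "pair (vsub x y) f = pair x f - pair y f"
  by (simp add: pair_commute[of _ f])
lemma pair_vscale_left [simp]: "pair (vscale c x) f = c * pair x f"
  by (simp add: pair_commute[of _ f])
lemma pair_vzero_left [simp]: "pair vzero f = 0"
  by (simp add: pair_commute[of _ f])

lemma pair_Plus:
  fixes u v :: "'a::finite + 'b::finite \<Rightarrow> 'k::field"
  shows "pair u v = pair (u \<circ> Inl) (v \<circ> Inl) + pair (u \<circ> Inr) (v \<circ> Inr)"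
  unfolding pair_def by (subst UNIV_Plus_UNIV[symmetric], subst sum.Plus) auto

lemma comp_vadd: "vadd u v \<circ> f = vadd (u \<circ> f) (v \<circ> f)"
  by (simp add: vadd_def fun_eq_iff)
lemma comp_vsub: "vsub u v \<circ> f = vsub (u \<circ> f) (v \<circ> f)"
  by (simp add: vsub_def fun_eq_iff)
lemma comp_vscale: "vscale c u \<circ> f = vscale c (u \<circ> f)"
  by (simp add: vscale_def fun_eq_iff)
lemma comp_vzero: "vzero \<circ> f = vzero"
  by (simp add: vzero_def fun_eq_iff)

lemma Plus_fun_eqI: "u \<circ> Inl = v \<circ> Inl \<Longrightarrow> u \<circ> Inr = v \<circ> Inr \<Longrightarrow> u = v"
  by (metis comp_apply ext sum.exhaust)

lemma linear_mapI:
  "(\<And>x y. f (vadd x y) = vadd (f x) (f y)) \<Longrightarrow> (\<And>c x. f (vscale c x) = vscale c (f x))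
    \<Longrightarrow> linear_map f"
  unfolding linear_map_def by blast

lemma linear_map_vadd: "linear_map f \<Longrightarrow> f (vadd x y) = vadd (f x) (f y)"
  unfolding linear_map_def by blast
lemma linear_map_vscale: "linear_map f \<Longrightarrow> f (vscale c x) = vscale c (f x)"
  unfolding linear_map_def by blast
lemma linear_map_vzero: "linear_map f \<Longrightarrow> f vzero = vzero"
  using linear_map_vscale[of f 0 vzero] by (simp add: vscale_def vzero_def)
lemma linear_map_vsub: "linear_map f \<Longrightarrow> f (vsub x y) = vsub (f x) (f y)"
proof -
  have "vsub x y = vadd x (vscale (-1) y)" and "vsub (f x) (f y) = vadd (f x) (vscale (-1) (f y))"
    by (simp_all add: vsub_def vadd_def vscale_def fun_eq_iff)
  then show "linear_map f \<Longrightarrow> ?thesis" by (simp add: linear_map_vadd linear_map_vscale)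
qed

lemma linear_map_sum_delta:
  assumes "linear_map f" and "finite A"
  shows "f (\<lambda>i. \<Sum>j\<in>A. x j * delta j i) = (\<lambda>i. \<Sum>j\<in>A. x j * f (delta j) i)"
  using \<open>finite A\<close>
proof (induction A rule: finite_induct)
  case empty
  then show ?case using linear_map_vzero[OF assms(1)] by (simp add: vzero_def)
next
  case (insert a A)
  have "(\<lambda>i. \<Sum>j\<in>insert a A. x j * delta j i) =
      vadd (vscale (x a) (delta a)) (\<lambda>i. \<Sum>j\<in>A. x j * delta j i)"
    using insert by (simp add: vadd_def vscale_def fun_eq_iff)
  then have "f (\<lambda>i. \<Sum>j\<in>insert a A. x j * delta j i) =
      vadd (vscale (x a) (f (delta a))) (f (\<lambda>i. \<Sum>j\<in>A. x j * delta j i))"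
    using assms(1) by (simp add: linear_map_vadd linear_map_vscale)
  then show ?case using insert by (simp add: vadd_def vscale_def fun_eq_iff)
qed

lemma linear_map_expand:
  fixes f :: "('n::finite \<Rightarrow> 'k::field) \<Rightarrow> ('m \<Rightarrow> 'k)"
  assumes "linear_map f"
  shows "f x i = (\<Sum>j\<in>UNIV. x j * f (delta j) i)"
proof -
  have "(\<lambda>i. \<Sum>j\<in>UNIV. x j * delta j i) = x"
  proof
    fix i
    have "(\<Sum>j\<in>UNIV. x j * delta j i) = (\<Sum>j\<in>UNIV. if i = j then x j else 0)"
      by (rule sum.cong) (auto simp: delta_def)
    then show "(\<Sum>j\<in>UNIV. x j * delta j i) = x i" by simp
  qed
  then show ?thesis using linear_map_sum_delta[OF assms, of UNIV x] by simp
qed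

lemma pair_linear_map_expand:
  fixes f :: "('n::finite \<Rightarrow> 'k::field) \<Rightarrow> ('m::finite \<Rightarrow> 'k)"
  assumes "linear_map f"
  shows "pair v (f x) = (\<Sum>j\<in>UNIV. x j * pair v (f (delta j)))"
proof -
  have "pair v (f x) = (\<Sum>i\<in>UNIV. v i * (\<Sum>j\<in>UNIV. x j * f (delta j) i))"
    unfolding pair_def by (simp only: linear_map_expand[OF assms, of x])
  also have "\<dots> = (\<Sum>j\<in>UNIV. x j * (\<Sum>i\<in>UNIV. v i * f (delta j) i))"
    unfolding sum_distrib_left by (subst sum.swap) (simp add: algebra_simps)
  finally show ?thesis unfolding pair_def .
qed

lemma pair_transpose:
  fixes f :: "('n::finite \<Rightarrow> 'k::field) \<Rightarrow> ('m::finite \<Rightarrow> 'k)"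
  assumes "linear_map f"
  shows "pair x (\<lambda>j. pair v (f (delta j))) = pair v (f x)"
  using pair_linear_map_expand[OF assms, of v x] unfolding pair_def[of x] by simp

lemma pair_adj: "linear_map E \<Longrightarrow> pair (adj E \<xi>) x = pair \<xi> (E x)"
  unfolding adj_def using pair_transpose[of E x \<xi>] by (simp add: pair_commute)

lemma adj_linear_map: "linear_map (adj E)"
  by (rule linear_mapI; simp add: adj_def fun_eq_iff; simp add: vadd_def vscale_def)

lemma pair_coad: "linear_map (B a) \<Longrightarrow> pair \<xi> (coad B a v) = - pair v (B a \<xi>)"
  unfolding coad_def using pair_transpose[of "B a" \<xi> v]
  by (simp add: pair_def sum_negf)

definition linear_functional :: "(('n \<Rightarrow> 'k::field) \<Rightarrow> 'k) \<Rightarrow> bool" where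
  "linear_functional f \<longleftrightarrow> (\<forall>x y. f (vadd x y) = f x + f y) \<and> (\<forall>c x. f (vscale c x) = c * f x)"

lemma linear_functional_expand:
  fixes f :: "('n::finite \<Rightarrow> 'k::field) \<Rightarrow> 'k"
  assumes "linear_functional f"
  shows "f x = (\<Sum>j\<in>UNIV. x j * f (delta j))"
proof -
  have "linear_map (\<lambda>x (_::unit). f x)"
    using assms unfolding linear_functional_def linear_map_def by (simp add: vadd_def vscale_def)
  from linear_map_expand[OF this, of x] show ?thesis by simp
qed

lemma bilinear_form_eq_zero:
  fixes Q :: "('n::finite \<Rightarrow> 'k::field) \<Rightarrow> ('n \<Rightarrow> 'k) \<Rightarrow> 'k"
  assumes "\<And>x. linear_functional (Q x)" and "\<And>y. linear_functional (\<lambda>x. Q x y)"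
    and "\<And>i j. Q (delta i) (delta j) = 0"
  shows "Q x y = 0"
proof -
  have "Q x (delta j) = 0" for j
    using linear_functional_expand[OF assms(2)[of "delta j"], of x] by (simp add: assms(3))
  then show ?thesis
    using linear_functional_expand[OF assms(1)[of x], of y] by simp
qed

lemma bilinear_map_linear_right: "bilinear_map B \<Longrightarrow> linear_map (B x)"
  unfolding bilinear_map_def by blast
lemma bilinear_map_linear_left: "bilinear_map B \<Longrightarrow> linear_map (\<lambda>x. B x y)"
  unfolding bilinear_map_def by blast

lemma bilinear_map_left_simps:
  assumes "bilinear_map B"
  shows "B (vadd x x') y = vadd (B x y) (B x' y)" "B (vsub x x') y = vsub (B x y) (B x' y)"
    "B (vscale c x) y = vscale c (B x y)" "B vzero y = vzero"
  by (simp_all add: linear_map_vadd[OF bilinear_map_linear_left[OF assms]]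
      linear_map_vsub[OF bilinear_map_linear_left[OF assms]]
      linear_map_vscale[OF bilinear_map_linear_left[OF assms]]
      linear_map_vzero[OF bilinear_map_linear_left[OF assms]])

lemma bilinear_map_right_simps:
  assumes "bilinear_map B"
  shows "B y (vadd x x') = vadd (B y x) (B y x')" "B y (vsub x x') = vsub (B y x) (B y x')"
    "B y (vscale c x) = vscale c (B y x)" "B y vzero = vzero"
  by (simp_all add: linear_map_vadd[OF bilinear_map_linear_right[OF assms]]
      linear_map_vsub[OF bilinear_map_linear_right[OF assms]]
      linear_map_vscale[OF bilinear_map_linear_right[OF assms]]
      linear_map_vzero[OF bilinear_map_linear_right[OF assms]])

lemma coad_left_simps:
  assumes "bilinear_map B"
  shows "coad B (vadd a a') v = vadd (coad B a v) (coad B a' v)"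
    "coad B (vsub a a') v = vsub (coad B a v) (coad B a' v)"
    "coad B (vscale c a) v = vscale c (coad B a v)" "coad B vzero v = vzero"
  by (simp_all add: coad_def bilinear_map_left_simps[OF assms] fun_eq_iff)
    (simp_all add: vadd_def vsub_def vscale_def vzero_def)

lemma coad_right_simps:
  "coad B a (vadd v w) = vadd (coad B a v) (coad B a w)"
  "coad B a (vsub v w) = vsub (coad B a v) (coad B a w)"
  "coad B a (vscale c v) = vscale c (coad B a v)" "coad B a vzero = vzero"
  by (simp_all add: coad_def fun_eq_iff) (simp_all add: vadd_def vsub_def vscale_def vzero_def)

lemma pair_coad_bilinear:
  assumes "bilinear_map B"
  shows "pair \<xi> (coad B a v) = - pair v (B a \<xi>)" "pair (coad B a v) \<xi> = - pair v (B a \<xi>)"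
  using pair_coad[OF bilinear_map_linear_right[OF assms]] by (simp_all add: pair_commute[of _ \<xi>])

lemma lie_algebra_bilinear: "lie_algebra B \<Longrightarrow> bilinear_map B"
  unfolding lie_algebra_def by blast

lemma lie_algebra_alternating: "lie_algebra B \<Longrightarrow> B x x = vzero"
  unfolding lie_algebra_def by blast

lemma pair_lie_algebra_jacobi:
  assumes "lie_algebra B"
  shows "pair t (B x (B y z)) + pair t (B y (B z x)) + pair t (B z (B x y)) = 0"
proof -
  have "vadd (vadd (B x (B y z)) (B y (B z x))) (B z (B x y)) = vzero"
    using assms unfolding lie_algebra_def by blast
  then show ?thesis by (metis pair_vadd_right pair_vzero_right)
qed

lemma lie_algebra_antisym:
  assumes "lie_algebra B"
  shows "B y x = vsub vzero (B x y)"
proof (rule ext)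
  fix i
  have bil: "bilinear_map B" and alt: "\<And>x. B x x = vzero"
    using assms unfolding lie_algebra_def by blast+
  have "vzero = B (vadd x y) (vadd x y)" using alt by simp
  also have "\<dots> = vadd (vadd (B x x) (B y x)) (vadd (B x y) (B y y))"
    by (simp add: bilinear_map_left_simps[OF bil] bilinear_map_right_simps[OF bil])
  finally have "B y x i + B x y i = 0"
    using alt by (simp add: vadd_def vzero_def fun_eq_iff)
  then show "B y x i = vsub vzero (B x y) i"
    by (simp add: vsub_def vzero_def eq_neg_iff_add_eq_0)
qed

lemma lie_algebra_jacobi_derivation:
  assumes "lie_algebra B"
  shows "B (B x y) z = vsub (B x (B y z)) (B y (B x z))"
proof (rule ext)
  fix i
  have "vadd (vadd (B x (B y z)) (B y (B z x))) (B z (B x y)) = vzero"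
    using assms unfolding lie_algebra_def by blast
  moreover have "B z (B x y) = vsub vzero (B (B x y) z)" and "B y (B z x) = vsub vzero (B y (B x z))"
    using lie_algebra_antisym[OF assms, where y=z and x=x]
      lie_algebra_antisym[OF assms, where y=z and x="B x y"]
      bilinear_map_right_simps[OF lie_algebra_bilinear[OF assms]] by simp_all
  ultimately have "B x (B y z) i - B y (B x z) i - B (B x y) z i = 0"
    by (simp add: fun_eq_iff vadd_def vsub_def vzero_def)
  then show "B (B x y) z i = vsub (B x (B y z)) (B y (B x z)) i"
    by (simp add: vsub_def)
qed

section \<open>The compatibility condition of a Lie bialgebra\<close>

definition bialgebra_compatible ::
  "(('n::finite \<Rightarrow> 'k::field) \<Rightarrow> ('n \<Rightarrow> 'k) \<Rightarrow> ('n \<Rightarrow> 'k)) \<Rightarrow> (('n \<Rightarrow> 'k) \<Rightarrow> ('n \<Rightarrow> 'k) \<Rightarrow> ('n \<Rightarrow> 'k)) \<Rightarrow> bool"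
  where "bialgebra_compatible B BS \<longleftrightarrow> (\<forall>\<xi> \<eta> x y. pair (B x y) (BS \<xi> \<eta>) =
      - pair y (BS (coad B x \<xi>) \<eta>) - pair y (BS \<xi> (coad B x \<eta>))
      + pair x (BS (coad B y \<xi>) \<eta>) + pair x (BS \<xi> (coad B y \<eta>)))"

lemma ad_tensor1_cobracket:
  assumes "bilinear_map BS"
  shows "ad_tensor1 B x (cobracket BS y) (i, j) = - pair y (BS (coad B x (delta i)) (delta j))"
proof -
  have "pair y (BS (coad B x (delta i)) (delta j)) =
      (\<Sum>k\<in>UNIV. coad B x (delta i) k * pair y (BS (delta k) (delta j)))"
    by (rule pair_linear_map_expand[OF bilinear_map_linear_left[OF assms]])
  then show ?thesis
    unfolding ad_tensor1_def cobracket_def by (simp add: coad_def pair_commute sum_negf)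
qed

lemma ad_tensor2_cobracket:
  assumes "bilinear_map BS"
  shows "ad_tensor2 B x (cobracket BS y) (i, j) = - pair y (BS (delta i) (coad B x (delta j)))"
proof -
  have "pair y (BS (delta i) (coad B x (delta j))) =
      (\<Sum>k\<in>UNIV. coad B x (delta j) k * pair y (BS (delta i) (delta k)))"
    by (rule pair_linear_map_expand[OF bilinear_map_linear_right[OF assms]])
  then show ?thesis
    unfolding ad_tensor2_def cobracket_def by (simp add: coad_def pair_commute sum_negf)
qed

lemma cobracket_cocycle_iff_compatible:
  fixes B BS :: "('n::finite \<Rightarrow> 'k::field) \<Rightarrow> ('n \<Rightarrow> 'k) \<Rightarrow> ('n \<Rightarrow> 'k)"
  assumes "bilinear_map BS"
  shows "(\<forall>x y. cobracket BS (B x y) =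
        (\<lambda>p. (ad_tensor1 B x (cobracket BS y) p + ad_tensor2 B x (cobracket BS y) p)
           - (ad_tensor1 B y (cobracket BS x) p + ad_tensor2 B y (cobracket BS x) p)))
     \<longleftrightarrow> bialgebra_compatible B BS" (is "(\<forall>x y. ?cocycle x y) \<longleftrightarrow> _")
proof -
  let ?defect = "\<lambda>x y \<xi> \<eta>. pair (B x y) (BS \<xi> \<eta>) -
      (- pair y (BS (coad B x \<xi>) \<eta>) - pair y (BS \<xi> (coad B x \<eta>))
       + pair x (BS (coad B y \<xi>) \<eta>) + pair x (BS \<xi> (coad B y \<eta>)))"
  have cocycle_iff: "?cocycle x y \<longleftrightarrow> (\<forall>i j. ?defect x y (delta i) (delta j) = 0)" for x y
    by (auto simp: fun_eq_iff ad_tensor1_cobracket[OF assms] ad_tensor2_cobracket[OF assms]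
        cobracket_def[of BS "B x y"] pair_commute[of "BS _ _"])
  have "?defect x y \<xi> \<eta> = 0" if "\<forall>i j. ?defect x y (delta i) (delta j) = 0" for x y \<xi> \<eta>
  proof (rule bilinear_form_eq_zero[where Q = "?defect x y"])
    show "linear_functional (?defect x y \<xi>)" for \<xi>
      unfolding linear_functional_def
      by (simp add: bilinear_map_right_simps[OF assms] coad_right_simps algebra_simps)
  next
    show "linear_functional (\<lambda>\<xi>. ?defect x y \<xi> \<eta>)" for \<eta>
      unfolding linear_functional_def
      by (simp add: bilinear_map_left_simps[OF assms] coad_right_simps algebra_simps)
  qed (use that in blast)
  then show ?thesis
    unfolding bialgebra_compatible_def cocycle_iff by (metis eq_iff_diff_eq_0)
qed

lemma lie_bialgebra_iff_compatible:
  "lie_bialgebra B BS \<longleftrightarrow> lie_algebra B \<and> lie_algebra BS \<and> bialgebra_compatible B BS"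
  unfolding lie_bialgebra_def
  using cobracket_cocycle_iff_compatible[OF lie_algebra_bilinear] by blast

text \<open>A cobracket that is a coboundary \<open>w \<mapsto> ad\<^sub>w \<rho>\<close> with respect to an invariant form
  \<open>pair (\<sigma> _) _\<close> satisfies the compatibility condition by the Jacobi identity of \<open>B\<close> alone.\<close>

lemma bialgebra_compatible_coboundary:
  fixes B BS :: "('n::finite \<Rightarrow> 'k::field) \<Rightarrow> ('n \<Rightarrow> 'k) \<Rightarrow> ('n \<Rightarrow> 'k)"
    and \<sigma> :: "('n \<Rightarrow> 'k) \<Rightarrow> ('n \<Rightarrow> 'k)" and \<rho> :: "('n \<Rightarrow> 'k) \<Rightarrow> ('n \<Rightarrow> 'k) \<Rightarrow> 'k"
  assumes "lie_algebra B"
    and \<sigma>_involution: "\<And>P. \<sigma> (\<sigma> P) = P"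
    and coad_\<sigma>: "\<And>u P. coad B u P = \<sigma> (B u (\<sigma> P))"
    and \<rho>_vsub: "\<And>a a' c. \<rho> (vsub a a') c = \<rho> a c - \<rho> a' c"
      "\<And>a c c'. \<rho> a (vsub c c') = \<rho> a c - \<rho> a c'"
    and BS_\<rho>: "\<And>w a c. pair w (BS (\<sigma> a) (\<sigma> c)) = \<rho> (B w a) c + \<rho> a (B w c)"
  shows "bialgebra_compatible B BS"
  unfolding bialgebra_compatible_def
proof (intro allI)
  fix P Q u v
  obtain a c where P: "P = \<sigma> a" and Q: "Q = \<sigma> c" using \<sigma>_involution by metis
  have jacobi: "B (B u v) w = vsub (B u (B v w)) (B v (B u w))" for w
    by (rule lie_algebra_jacobi_derivation[OF assms(1)])
  show "pair (B u v) (BS P Q) =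
      - pair v (BS (coad B u P) Q) - pair v (BS P (coad B u Q))
      + pair u (BS (coad B v P) Q) + pair u (BS P (coad B v Q))"
    unfolding P Q coad_\<sigma> \<sigma>_involution BS_\<rho> jacobi \<rho>_vsub by simp
qed

section \<open>The Drinfel'd double\<close>

lemma delta_Inl_comp_Inl [simp]: "delta (Inl k) \<circ> Inl = delta k"
  by (simp add: delta_def fun_eq_iff)
lemma delta_Inl_comp_Inr [simp]: "delta (Inl k) \<circ> Inr = vzero"
  by (simp add: delta_def vzero_def fun_eq_iff)
lemma delta_Inr_comp_Inl [simp]: "delta (Inr k) \<circ> Inl = vzero"
  by (simp add: delta_def vzero_def fun_eq_iff)
lemma delta_Inr_comp_Inr [simp]: "delta (Inr k) \<circ> Inr = delta k"
  by (simp add: delta_def fun_eq_iff)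

lemma double_bracket_Inl:
  "double_bracket b bs u v \<circ> Inl =
    vsub (vadd (b (u \<circ> Inl) (v \<circ> Inl)) (coad bs (u \<circ> Inr) (v \<circ> Inl))) (coad bs (v \<circ> Inr) (u \<circ> Inl))"
  unfolding double_bracket_def Let_def by (simp add: fun_eq_iff)
lemma double_bracket_Inr:
  "double_bracket b bs u v \<circ> Inr =
    vsub (vadd (bs (u \<circ> Inr) (v \<circ> Inr)) (coad b (u \<circ> Inl) (v \<circ> Inr))) (coad b (v \<circ> Inl) (u \<circ> Inr))"
  unfolding double_bracket_def Let_def by (simp add: fun_eq_iff)

lemma dual_double_bracket_Inl:
  "dual_double_bracket b bs f g \<circ> Inl = vsub vzero (bs (f \<circ> Inl) (g \<circ> Inl))"
  unfolding dual_double_bracket_def by (simp add: fun_eq_iff vsub_def vzero_def)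
lemma dual_double_bracket_Inr: "dual_double_bracket b bs f g \<circ> Inr = b (f \<circ> Inr) (g \<circ> Inr)"
  unfolding dual_double_bracket_def by (simp add: fun_eq_iff)

lemma double_map_Inl: "double_map E v \<circ> Inl = E (v \<circ> Inl)"
  by (simp add: double_map_def fun_eq_iff)
lemma double_map_Inr: "double_map E v \<circ> Inr = adj E (v \<circ> Inr)"
  by (simp add: double_map_def fun_eq_iff)

text \<open>\<open>swap_summands\<close> identifies \<open>\<frakd>\<^sup>* = \<frakg>\<^sup>* \<oplus> \<frakg>\<close> with \<open>\<frakd> = \<frakg> \<oplus> \<frakg>\<^sup>*\<close>, so that
  \<open>pair (swap_summands u) v\<close> is the canonical invariant form of the double.\<close>

definition swap_summands :: "('n + 'n \<Rightarrow> 'k) \<Rightarrow> ('n + 'n \<Rightarrow> 'k)" where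
  "swap_summands u = (\<lambda>s. case s of Inl i \<Rightarrow> u (Inr i) | Inr i \<Rightarrow> u (Inl i))"

lemma swap_summands_Inl [simp]: "swap_summands u \<circ> Inl = u \<circ> Inr"
  by (simp add: swap_summands_def fun_eq_iff)
lemma swap_summands_Inr [simp]: "swap_summands u \<circ> Inr = u \<circ> Inl"
  by (simp add: swap_summands_def fun_eq_iff)
lemma swap_summands_swap_summands [simp]: "swap_summands (swap_summands u) = u"
  by (simp add: swap_summands_def fun_eq_iff split: sum.split)

locale drinfeld_double =
  fixes b bs :: "('n::finite \<Rightarrow> 'k::field) \<Rightarrow> ('n \<Rightarrow> 'k) \<Rightarrow> ('n \<Rightarrow> 'k)"
  assumes lie_bialgebra: "lie_bialgebra b bs"
begin

abbreviation "D \<equiv> double_bracket b bs"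
abbreviation "D\<^sub>r \<equiv> dual_double_bracket b bs"

lemma lie_b: "lie_algebra b" and lie_bs: "lie_algebra bs" and compatible: "bialgebra_compatible b bs"
  using lie_bialgebra unfolding lie_bialgebra_iff_compatible by blast+

lemma bilinear_b: "bilinear_map b" and bilinear_bs: "bilinear_map bs"
  using lie_b lie_bs by (simp_all add: lie_algebra_bilinear)

lemmas bracket_simps =
  bilinear_map_left_simps[OF bilinear_b] bilinear_map_right_simps[OF bilinear_b]
  bilinear_map_left_simps[OF bilinear_bs] bilinear_map_right_simps[OF bilinear_bs]
  coad_left_simps[OF bilinear_b] coad_left_simps[OF bilinear_bs] coad_right_simps
  comp_vadd comp_vsub comp_vscale comp_vzero

lemmas pair_coad_simps = pair_coad_bilinear[OF bilinear_b] pair_coad_bilinear[OF bilinear_bs]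

lemma bilinear_double_bracket: "bilinear_map D"
  unfolding bilinear_map_def linear_map_def
  by (intro conjI allI; rule Plus_fun_eqI; rule pair_eqI)
    (simp_all add: double_bracket_Inl double_bracket_Inr bracket_simps algebra_simps)

lemma pair_b_coad_bs_right: "pair t (b x (coad bs \<eta> z)) = pair z (bs \<eta> (coad b x t))"
proof -
  have "pair t (b x (coad bs \<eta> z)) = - pair (coad bs \<eta> z) (coad b x t)"
    by (simp add: pair_coad_bilinear(1)[OF bilinear_b, of "coad bs \<eta> z"])
  also have "\<dots> = pair z (bs \<eta> (coad b x t))"
    by (simp add: pair_coad_bilinear(2)[OF bilinear_bs])
  finally show ?thesis .
qed

lemma pair_b_coad_bs_left: "pair t (b (coad bs \<eta> z) x) = - pair z (bs \<eta> (coad b x t))"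
  by (simp add: lie_algebra_antisym[OF lie_b, where y = "coad bs \<eta> z"] pair_b_coad_bs_right)

lemma pair_bs_coad_b_left: "pair t (bs (coad b x z) y) = - pair t (bs y (coad b x z))"
  by (simp add: lie_algebra_antisym[OF lie_bs, where y = "coad b x z"])

lemma pair_compatible: "pair (b x y) (bs \<xi> \<eta>) =
    - pair y (bs (coad b x \<xi>) \<eta>) - pair y (bs \<xi> (coad b x \<eta>))
    + pair x (bs (coad b y \<xi>) \<eta>) + pair x (bs \<xi> (coad b y \<eta>))"
  using compatible unfolding bialgebra_compatible_def by blast

text \<open>In both components the Jacobiator of the double, paired with a test vector, expands to the
  Jacobiator of \<open>b\<close> (resp. \<open>bs\<close>) plus instances of the compatibility condition.\<close>

lemma jacobi_double_bracket:
  "vadd (vadd (D u (D v w)) (D v (D w u))) (D w (D u v)) = vzero" (is "?J = _")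
proof (rule Plus_fun_eqI; rule pair_eqI)
  note simps = double_bracket_Inl double_bracket_Inr bracket_simps pair_coad_simps
    pair_b_coad_bs_right pair_b_coad_bs_left pair_commute[of "bs _ _" "b _ _"] pair_compatible
    lie_algebra_jacobi_derivation[OF lie_b] lie_algebra_jacobi_derivation[OF lie_bs] algebra_simps
  show "pair t (?J \<circ> Inl) = pair t (vzero \<circ> Inl)" for t
    using pair_lie_algebra_jacobi[OF lie_b, of t "u \<circ> Inl" "v \<circ> Inl" "w \<circ> Inl"]
    by (simp add: simps)
  show "pair t (?J \<circ> Inr) = pair t (vzero \<circ> Inr)" for t
    using pair_lie_algebra_jacobi[OF lie_bs, of t "u \<circ> Inr" "v \<circ> Inr" "w \<circ> Inr"]
    by (simp add: simps pair_bs_coad_b_left)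
qed

lemma lie_algebra_double_bracket: "lie_algebra D"
  unfolding lie_algebra_def
proof (intro conjI allI)
  show "D u u = vzero" for u
    by (rule Plus_fun_eqI; rule pair_eqI) (simp_all add: double_bracket_Inl double_bracket_Inr
        bracket_simps algebra_simps lie_algebra_alternating[OF lie_b] lie_algebra_alternating[OF lie_bs])
qed (simp_all add: bilinear_double_bracket jacobi_double_bracket)

lemma lie_algebra_dual_double_bracket: "lie_algebra D\<^sub>r"
  unfolding lie_algebra_def
proof (intro conjI allI)
  note simps = dual_double_bracket_Inl dual_double_bracket_Inr bracket_simps
  show "bilinear_map D\<^sub>r"
    unfolding bilinear_map_def linear_map_def
    by (intro conjI allI; rule Plus_fun_eqI; rule pair_eqI) (simp_all add: simps algebra_simps)
  show "D\<^sub>r f f = vzero" for f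
    by (rule Plus_fun_eqI; rule pair_eqI)
      (simp_all add: simps lie_algebra_alternating[OF lie_b] lie_algebra_alternating[OF lie_bs])
  show "vadd (vadd (D\<^sub>r f (D\<^sub>r g h)) (D\<^sub>r g (D\<^sub>r h f))) (D\<^sub>r h (D\<^sub>r f g)) = vzero" for f g h
  proof (rule Plus_fun_eqI; rule pair_eqI)
    show "pair t (vadd (vadd (D\<^sub>r f (D\<^sub>r g h)) (D\<^sub>r g (D\<^sub>r h f))) (D\<^sub>r h (D\<^sub>r f g)) \<circ> Inl) =
        pair t (vzero \<circ> Inl)" for t
      using pair_lie_algebra_jacobi[OF lie_bs, of t "f \<circ> Inl" "g \<circ> Inl" "h \<circ> Inl"]
      by (simp add: simps)
    show "pair t (vadd (vadd (D\<^sub>r f (D\<^sub>r g h)) (D\<^sub>r g (D\<^sub>r h f))) (D\<^sub>r h (D\<^sub>r f g)) \<circ> Inr) =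
        pair t (vzero \<circ> Inr)" for t
      using pair_lie_algebra_jacobi[OF lie_b, of t "f \<circ> Inr" "g \<circ> Inr" "h \<circ> Inr"]
      by (simp add: simps)
  qed
qed

lemma pair_swap_summands_double_bracket:
  "pair (swap_summands a) (D u c) = - pair (swap_summands (D u a)) c"
  by (simp add: pair_Plus double_bracket_Inl double_bracket_Inr bracket_simps pair_coad_simps
      pair_commute[of "b _ _"] pair_commute[of "bs _ _"]
      lie_algebra_antisym[OF lie_bs, where y = "c \<circ> Inr" and x = "a \<circ> Inr"]
      lie_algebra_antisym[OF lie_b, where y = "c \<circ> Inl" and x = "a \<circ> Inl"])

lemma coad_double_bracket: "coad D u P = swap_summands (D u (swap_summands P))"
proof (rule pair_eqI)
  fix t
  have "pair t (coad D u P) = - pair P (D u t)"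
    by (rule pair_coad[OF bilinear_map_linear_right[OF bilinear_double_bracket]])
  also have "\<dots> = pair (swap_summands (D u (swap_summands P))) t"
    using pair_swap_summands_double_bracket[of "swap_summands P" u t] by simp
  finally show "pair t (coad D u P) = pair t (swap_summands (D u (swap_summands P)))"
    by (simp add: pair_commute)
qed

lemma pair_dual_double_bracket:
  "pair w (D\<^sub>r (swap_summands a) (swap_summands c)) =
    pair (D w a \<circ> Inr) (c \<circ> Inl) + pair (a \<circ> Inr) (D w c \<circ> Inl)"
  by (simp add: pair_Plus dual_double_bracket_Inl dual_double_bracket_Inr double_bracket_Inl
      double_bracket_Inr bracket_simps pair_coad_simps pair_commute[of "b _ _"] pair_commute[of "bs _ _"]
      lie_algebra_antisym[OF lie_bs, where y = "c \<circ> Inr" and x = "a \<circ> Inr"])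

text \<open>Here \<open>\<rho> a c = pair (a \<circ> Inr) (c \<circ> Inl)\<close> is the canonical element \<open>r = \<Sum>\<^sub>i e\<^sub>i \<otimes> \<xi>\<^sub>i\<close>.\<close>

lemma compatible_double: "bialgebra_compatible D D\<^sub>r"
  by (rule bialgebra_compatible_coboundary[where \<sigma> = swap_summands
        and \<rho> = "\<lambda>a c. pair (a \<circ> Inr) (c \<circ> Inl)"])
    (simp_all add: lie_algebra_double_bracket coad_double_bracket pair_dual_double_bracket comp_vsub)

lemma lie_bialgebra_double: "lie_bialgebra D D\<^sub>r"
  by (simp add: lie_bialgebra_iff_compatible lie_algebra_double_bracket
      lie_algebra_dual_double_bracket compatible_double)

end

section \<open>ENL structures\<close>

lemma adj_adj:
  assumes "linear_map E"
  shows "adj (adj E) = E"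
proof (rule ext, rule pair_eqI)
  fix x t
  have "pair t (adj (adj E) x) = pair (adj (adj E) x) t" by (rule pair_commute)
  also have "\<dots> = pair (adj E t) x" by (simp add: pair_adj[OF adj_linear_map] pair_commute[of x])
  also have "\<dots> = pair t (E x)" by (rule pair_adj[OF assms])
  finally show "pair t (adj (adj E) x) = pair t (E x)" .
qed

lemma ENL_algebra_linear: "ENL_algebra B E \<Longrightarrow> linear_map E"
  unfolding ENL_algebra_def by blast

lemma ENL_algebra_right: "ENL_algebra B E \<Longrightarrow> E (B x y) = B x (E y)"
  unfolding ENL_algebra_def by blast

lemma ENL_algebra_left:
  assumes "ENL_algebra B E"
  shows "B (E x) y = E (B x y)"
proof -
  have lie: "lie_algebra B" and "linear_map E" using assms unfolding ENL_algebra_def by blast+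
  have "B (E x) y = vsub vzero (B y (E x))" by (rule lie_algebra_antisym[OF lie])
  also have "\<dots> = E (vsub vzero (B y x))"
    by (simp add: ENL_algebra_right[OF assms] linear_map_vsub[OF \<open>linear_map E\<close>]
        linear_map_vzero[OF \<open>linear_map E\<close>])
  also have "\<dots> = E (B x y)" by (simp add: lie_algebra_antisym[OF lie, where y = x and x = y])
  finally show ?thesis .
qed

lemma adj_coad_ENL_right:
  assumes "ENL_algebra B E"
  shows "adj E (coad B x \<xi>) = coad B x (adj E \<xi>)"
proof (rule pair_eqI)
  fix t
  have bil: "bilinear_map B" and lin: "linear_map E"
    using assms unfolding ENL_algebra_def by (simp_all add: lie_algebra_bilinear)
  have "pair t (adj E (coad B x \<xi>)) = pair (coad B x \<xi>) (E t)"
    by (simp add: pair_commute[of t] pair_adj[OF lin])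
  also have "\<dots> = - pair \<xi> (E (B x t))"
    by (simp add: pair_coad_bilinear[OF bil] ENL_algebra_right[OF assms])
  also have "\<dots> = - pair (adj E \<xi>) (B x t)"
    by (simp add: pair_adj[OF lin])
  also have "\<dots> = pair t (coad B x (adj E \<xi>))"
    by (simp add: pair_coad_bilinear[OF bil])
  finally show "pair t (adj E (coad B x \<xi>)) = pair t (coad B x (adj E \<xi>))" .
qed

lemma adj_coad_ENL_left:
  assumes "ENL_algebra B E"
  shows "adj E (coad B x \<xi>) = coad B (E x) \<xi>"
proof (rule pair_eqI)
  fix t
  have bil: "bilinear_map B" and lin: "linear_map E"
    using assms unfolding ENL_algebra_def by (simp_all add: lie_algebra_bilinear)
  have "pair t (adj E (coad B x \<xi>)) = pair (coad B x \<xi>) (E t)"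
    by (simp add: pair_commute[of t] pair_adj[OF lin])
  also have "\<dots> = - pair \<xi> (B (E x) t)"
    by (simp add: pair_coad_bilinear[OF bil] ENL_algebra_left[OF assms] ENL_algebra_right[OF assms])
  also have "\<dots> = pair t (coad B (E x) \<xi>)"
    by (simp add: pair_coad_bilinear[OF bil])
  finally show "pair t (adj E (coad B x \<xi>)) = pair t (coad B (E x) \<xi>)" .
qed

lemma adj_double_map_Inl: "adj (double_map E) f \<circ> Inl = adj E (f \<circ> Inl)"
proof
  fix j
  have "adj E vzero = vzero" by (rule linear_map_vzero[OF adj_linear_map])
  then show "(adj (double_map E) f \<circ> Inl) j = adj E (f \<circ> Inl) j"
    by (simp add: adj_def[of "double_map E"] pair_Plus double_map_Inl double_map_Inr)
      (simp add: adj_def)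
qed

lemma adj_double_map_Inr:
  assumes "linear_map E"
  shows "adj (double_map E) f \<circ> Inr = E (f \<circ> Inr)"
proof
  fix j
  have "(adj (double_map E) f \<circ> Inr) j = pair (f \<circ> Inr) (adj E (delta j))"
    by (simp add: adj_def[of "double_map E"] pair_Plus double_map_Inl double_map_Inr
        linear_map_vzero[OF assms])
  also have "\<dots> = E (f \<circ> Inr) j"
    by (simp add: pair_commute[of "f \<circ> Inr"] pair_adj[OF assms])
  finally show "(adj (double_map E) f \<circ> Inr) j = E (f \<circ> Inr) j" .
qed

locale ENL_drinfeld_double = drinfeld_double b bs
  for b bs :: "('n::finite \<Rightarrow> 'k::field) \<Rightarrow> ('n \<Rightarrow> 'k) \<Rightarrow> ('n \<Rightarrow> 'k)" +
  fixes E :: "('n \<Rightarrow> 'k) \<Rightarrow> ('n \<Rightarrow> 'k)"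
  assumes ENL_b: "ENL_algebra b E" and ENL_bs: "ENL_algebra bs (adj E)"
begin

lemma linear_E: "linear_map E"
  using ENL_b by (rule ENL_algebra_linear)

lemmas E_simps = linear_map_vadd[OF linear_E] linear_map_vsub[OF linear_E]
  linear_map_vscale[OF linear_E] linear_map_vzero[OF linear_E]
  linear_map_vadd[OF adj_linear_map] linear_map_vsub[OF adj_linear_map]
  linear_map_vscale[OF adj_linear_map] linear_map_vzero[OF adj_linear_map]

lemma E_coad_bs_right: "E (coad bs \<xi> y) = coad bs \<xi> (E y)"
  using adj_coad_ENL_right[OF ENL_bs] by (simp add: adj_adj[OF linear_E])

lemma E_coad_bs_left: "E (coad bs \<xi> y) = coad bs (adj E \<xi>) y"
  using adj_coad_ENL_left[OF ENL_bs] by (simp add: adj_adj[OF linear_E])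

lemma linear_double_map: "linear_map (double_map E)"
  by (rule linear_mapI; rule Plus_fun_eqI)
    (simp_all add: double_map_Inl double_map_Inr E_simps comp_vadd comp_vscale)

lemma ENL_algebra_double: "ENL_algebra D (double_map E)"
  unfolding ENL_algebra_def
proof (intro conjI allI)
  show "double_map E (D u v) = D u (double_map E v)" for u v
    by (rule Plus_fun_eqI) (simp_all add: double_map_Inl double_map_Inr double_bracket_Inl
        double_bracket_Inr E_simps ENL_algebra_right[OF ENL_b] ENL_algebra_right[OF ENL_bs]
        E_coad_bs_right[where \<xi> = "u \<circ> Inr"] E_coad_bs_left[where \<xi> = "v \<circ> Inr"]
        adj_coad_ENL_right[OF ENL_b, where x = "u \<circ> Inl"]
        adj_coad_ENL_left[OF ENL_b, where x = "v \<circ> Inl"])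
qed (simp_all add: lie_algebra_double_bracket linear_double_map)

lemma ENL_algebra_dual_double: "ENL_algebra D\<^sub>r (adj (double_map E))"
  unfolding ENL_algebra_def
proof (intro conjI allI)
  show "adj (double_map E) (D\<^sub>r f g) = D\<^sub>r f (adj (double_map E) g)" for f g
    by (rule Plus_fun_eqI) (simp_all add: adj_double_map_Inl
        adj_double_map_Inr[OF linear_E] dual_double_bracket_Inl dual_double_bracket_Inr E_simps
        ENL_algebra_right[OF ENL_b] ENL_algebra_right[OF ENL_bs])
qed (simp_all add: lie_algebra_dual_double_bracket adj_linear_map)

end

theorem proposition3p10:
  fixes b bs :: "('n::finite \<Rightarrow> 'k::field_char_0) \<Rightarrow> ('n \<Rightarrow> 'k) \<Rightarrow> ('n \<Rightarrow> 'k)"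
    and E :: "('n \<Rightarrow> 'k) \<Rightarrow> ('n \<Rightarrow> 'k)"
  assumes "alg_closed TYPE('k)"
    and "ENL_bialgebra b bs E"
  shows "ENL_bialgebra (double_bracket b bs) (dual_double_bracket b bs) (double_map E)"
proof -
  interpret ENL_drinfeld_double b bs E
    using assms(2) unfolding ENL_bialgebra_def by unfold_locales blast+
  show ?thesis
    unfolding ENL_bialgebra_def
    using lie_bialgebra_double ENL_algebra_double ENL_algebra_dual_double by blast
qed

end
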